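(* Every metrizable locally compact $J$-space has a countable base.
   Context: A topological space $X$ is a $J$-space if whenever $\{A,B\}$ is a cover of $X$ by closed sets with $A\cap B$ compact, then $A$ or $B$ is compact. *)

theory Defs
  imports "HOL-Analysis.Analysis"
begin

definition J_space :: "'a topology \<Rightarrow> bool" where
  "J_space X \<longleftrightarrow>
     (\<forall>A B. closedin X A \<and> closedin X B \<and> A \<union> B = topspace X \<and> compactin X (A \<inter> B)
        \<longrightarrow> compactin X A \<or> compactin X B)"

end

theory Submission
  imports Defs
begin

(* Fix a metric d on X.  By local compactness every point x has a "compact radius"
   r(x) > 0 (closed balls of smaller radius are compact), and r is 1-Lipschitz.
   Call x and y near if d x y < min (r x) (r y) / 2, and let the chain classes be the
   equivalence classes of the reflexive-transitive closure of nearness.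
   (1) The chain classes partition X into open sets, since the ball of radius r(x)/4
       around x lies in the class of x.
   (2) The near-neighbourhood of a compact set lies in a compact set (finitely many
       balls of radius 7/8 r), so every chain class is covered by countably many
       compact sets.
   (3) In a J-space every partition into nonempty open sets is finite: otherwise split
       it into two infinite subfamilies, whose unions are complementary closed sets
       with empty (hence compact) intersection, yet neither union is compact.
   Hence X is covered by countably many compact sets, and a metric space with this
   property is second countable because compact sets are totally bounded. *)

section \<open>Countable covers by compact sets\<close>

definition countable_compact_cover :: "'a topology \<Rightarrow> 'a set \<Rightarrow> bool" where
  "countable_compact_cover X S \<longleftrightarrow>
     (\<exists>\<K>. countable \<K> \<and> (\<forall>K\<in>\<K>. compactin X K) \<and> S \<subseteq> \<Union>\<K>)"

lemma countable_compact_cover_UN: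
  assumes "countable I" and "\<And>i. i \<in> I \<Longrightarrow> countable_compact_cover X (S i)"
  shows "countable_compact_cover X (\<Union>i\<in>I. S i)"
proof -
  have "\<forall>i\<in>I. \<exists>\<K>. countable \<K> \<and> (\<forall>K\<in>\<K>. compactin X K) \<and> S i \<subseteq> \<Union>\<K>"
    using assms(2) unfolding countable_compact_cover_def by blast
  then obtain \<K> where countable: "\<And>i. i \<in> I \<Longrightarrow> countable (\<K> i)"
    and compact: "\<And>i K. i \<in> I \<Longrightarrow> K \<in> \<K> i \<Longrightarrow> compactin X K"
    and covers: "\<And>i. i \<in> I \<Longrightarrow> S i \<subseteq> \<Union>(\<K> i)"
    by metis
  show ?thesis
    unfolding countable_compact_cover_def
  proof (intro exI conjI)
    show "countable (\<Union>i\<in>I. \<K> i)" using assms(1) countable by (rule countable_UN)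
    show "\<forall>K\<in>(\<Union>i\<in>I. \<K> i). compactin X K" using compact by blast
    show "(\<Union>i\<in>I. S i) \<subseteq> \<Union>(\<Union>i\<in>I. \<K> i)" using covers by fastforce
  qed
qed

text \<open>A metric space covered by countably many compact sets is second countable:
  the balls of radius \<open>1/(n+1)\<close> around finite \<open>1/(n+1)\<close>-nets of the compact sets
  form a countable base.\<close>
lemma (in Metric_space) countable_compact_cover_imp_second_countable:
  assumes "countable_compact_cover mtopology M"
  shows "second_countable mtopology"
proof -
  obtain \<K> where cK: "countable \<K>" and comp: "\<forall>K\<in>\<K>. compactin mtopology K"
    and cover: "M \<subseteq> \<Union>\<K>"
    using assms unfolding countable_compact_cover_def by blast
  have "\<forall>K\<in>\<K>. \<forall>n::nat. \<exists>F. finite F \<and> F \<subseteq> K \<and> K \<subseteq> (\<Union>x\<in>F. mball x (1/Suc n))"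
    using comp compactin_imp_mtotally_bounded unfolding mtotally_bounded_def by simp
  then obtain F where F: "\<And>K n. K \<in> \<K> \<Longrightarrow>
      finite (F K n) \<and> K \<subseteq> (\<Union>x\<in>F K n. mball x (1/Suc n))"
    by metis
  define C where "C = (\<Union>K\<in>\<K>. \<Union>n. F K n)"
  have "countable C"
    unfolding C_def using cK F by (intro countable_UN) (auto intro: countable_finite)
  define \<B> where "\<B> = (\<lambda>(c,n::nat). mball c (1/Suc n)) ` (C \<times> UNIV)"
  show ?thesis unfolding second_countable_def
  proof (intro exI conjI ballI allI impI)
    show "countable \<B>" unfolding \<B>_def using \<open>countable C\<close> by auto
    show "openin mtopology V" if "V \<in> \<B>" for V using that unfolding \<B>_def by auto
    fix U x assume "openin mtopology U \<and> x \<in> U"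
    then obtain r where r: "r > 0" "mball x r \<subseteq> U" and x: "x \<in> M"
      unfolding openin_mtopology by blast
    obtain n :: nat where n: "1/Suc n < r/2"
      using r(1) by (metis half_gt_zero_iff nat_approx_posE of_nat_Suc)
    obtain K where K: "K \<in> \<K>" "x \<in> K" using x cover by blast
    with F[of K n] obtain c where c: "c \<in> F K n" "x \<in> mball c (1/Suc n)" by blast
    have "mball c (1/Suc n) \<subseteq> mball x r"
    proof
      fix y assume "y \<in> mball c (1/Suc n)"
      moreover have "d x c < 1/Suc n" using c by (simp add: commute)
      ultimately show "y \<in> mball x r" using x n triangle[of x c y] by auto
    qed
    moreover have "mball c (1/Suc n) \<in> \<B>" unfolding \<B>_def C_def using c K by blast
    ultimately show "\<exists>V\<in>\<B>. x \<in> V \<and> V \<subseteq> U" using c r by blast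
  qed
qed

section \<open>Open partitions of J-spaces\<close>

lemma infinite_split:
  assumes "infinite A"
  obtains B where "B \<subseteq> A" "infinite B" "infinite (A - B)"
proof -
  obtain f :: "nat \<Rightarrow> _" where f: "inj f" "range f \<subseteq> A"
    using infinite_countable_subset assms by blast
  have "inj (\<lambda>n. f (2*n))" "inj (\<lambda>n. f (2*n+1))"
    using f(1) by (auto intro!: inj_onI dest: injD)
  then have evens: "infinite (range (\<lambda>n. f (2*n)))"
    and odds: "infinite (range (\<lambda>n. f (2*n+1)))"
    by (simp_all add: range_inj_infinite)
  have "f (2*n+1) \<notin> range (\<lambda>n. f (2*n))" for n
  proof
    assume "f (2*n+1) \<in> range (\<lambda>n. f (2*n))"
    then obtain m where "f (2*n+1) = f (2*m)" by blast
    then have "2*n+1 = 2*m" by (rule injD[OF f(1)])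
    then show False by presburger
  qed
  then have "range (\<lambda>n. f (2*n+1)) \<subseteq> A - range (\<lambda>n. f (2*n))"
    using f(2) unfolding image_subset_iff by simp
  then have "infinite (A - range (\<lambda>n. f (2*n)))"
    using odds by (rule infinite_super)
  moreover have "range (\<lambda>n. f (2*n)) \<subseteq> A" using f(2) by blast
  ultimately show ?thesis using evens that by blast
qed

text \<open>An infinite family of pairwise disjoint nonempty open sets has a non-compact union:
  the family itself is an open cover without finite subcover.\<close>
lemma infinite_disjoint_open_Union_not_compact:
  assumes "infinite \<D>" and "\<And>U. U \<in> \<D> \<Longrightarrow> openin X U" and "{} \<notin> \<D>"
    and "pairwise disjnt \<D>"
  shows "\<not> compactin X (\<Union>\<D>)"
proof
  assume "compactin X (\<Union>\<D>)"
  then have "\<exists>\<F>. finite \<F> \<and> \<F> \<subseteq> \<D> \<and> \<Union>\<D> \<subseteq> \<Union>\<F>"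
    by (rule compactinD[OF _ assms(2) subset_refl])
  then obtain \<F> where \<F>: "finite \<F>" "\<F> \<subseteq> \<D>" "\<Union>\<D> \<subseteq> \<Union>\<F>" by metis
  have "\<not> \<D> \<subseteq> \<F>"
  proof
    assume "\<D> \<subseteq> \<F>"
    then have "finite \<D>" using \<F>(1) by (rule finite_subset)
    then show False using assms(1) by simp
  qed
  then obtain U where U: "U \<in> \<D>" "U \<notin> \<F>" by blast
  then obtain x where x: "x \<in> U" using assms(3) by (metis equals0I)
  then obtain V where V: "V \<in> \<F>" "x \<in> V" using U(1) \<F>(3) by blast
  have "U \<noteq> V" using U(2) V(1) by blast
  moreover have "V \<in> \<D>" using V(1) \<F>(2) by blast
  ultimately have "disjnt U V" using assms(4) U(1) by (metis pairwiseD)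
  then show False using x V(2) by (simp add: disjnt_iff)
qed

text \<open>In a J-space every partition of the space into nonempty open sets is finite:
  two infinite subfamilies would have complementary closed, non-compact unions.\<close>
lemma J_space_open_partition_finite:
  assumes J: "J_space X" and opn: "\<And>U. U \<in> \<P> \<Longrightarrow> openin X U" and nonempty: "{} \<notin> \<P>"
    and disj: "pairwise disjnt \<P>" and cover: "\<Union>\<P> = topspace X"
  shows "finite \<P>"
proof (rule ccontr)
  assume "infinite \<P>"
  then obtain \<B> where \<B>: "\<B> \<subseteq> \<P>" "infinite \<B>" "infinite (\<P> - \<B>)"
    by (rule infinite_split)
  define A B where "A = \<Union>\<B>" and "B = \<Union>(\<P> - \<B>)"
  have "U \<inter> V = {}" if "U \<in> \<B>" "V \<in> \<P> - \<B>" for U V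
    using disj that \<B>(1) unfolding pairwise_def disjnt_def by (metis DiffE subsetD)
  then have "A \<inter> B = {}" unfolding A_def B_def by blast
  moreover have "A \<union> B = topspace X" using cover \<B>(1) unfolding A_def B_def by blast
  ultimately have "topspace X - A = B" "topspace X - B = A" by blast+
  moreover have "openin X A" "openin X B"
    unfolding A_def B_def using opn \<B>(1) by (auto intro: openin_Union)
  ultimately have "closedin X A" "closedin X B"
    using \<open>A \<union> B = topspace X\<close> unfolding closedin_def by auto
  then have "compactin X A \<or> compactin X B"
    using J \<open>A \<inter> B = {}\<close> \<open>A \<union> B = topspace X\<close> unfolding J_space_def by simp
  moreover have "\<not> compactin X A"
    unfolding A_def using \<B> opn nonempty disj
    by (intro infinite_disjoint_open_Union_not_compact) (auto intro: pairwise_subset)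
  moreover have "\<not> compactin X B"
    unfolding B_def using \<B> opn nonempty disj
    by (intro infinite_disjoint_open_Union_not_compact) (auto intro: pairwise_subset)
  ultimately show False by blast
qed

section \<open>Chain classes of a locally compact metric space\<close>

locale locally_compact_metric = Metric_space +
  assumes locally_compact: "locally_compact_space mtopology"
begin

lemma compact_mcball_exists:
  assumes x: "x \<in> M"
  shows "\<exists>s. 0 < s \<and> s \<le> 1 \<and> compactin mtopology (mcball x s)"
proof -
  obtain U K where UK: "openin mtopology U" "compactin mtopology K" "x \<in> U" "U \<subseteq> K"
    using locally_compact x unfolding locally_compact_space_def by auto
  then obtain e where e: "e > 0" "mball x e \<subseteq> U" unfolding openin_mtopology by blast
  define s where "s = min (e/2) 1"
  have "mcball x s \<subseteq> K" using e UK(4) x unfolding s_def by fastforce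
  then have "compactin mtopology (mcball x s)"
    using UK(2) closed_compactin closedin_mcball by blast
  then show ?thesis using e by (intro exI[of _ s]) (auto simp: s_def)
qed

definition compact_radius :: "'a \<Rightarrow> real" where
  "compact_radius x = Sup {s. 0 < s \<and> s \<le> 1 \<and> compactin mtopology (mcball x s)}"

lemma compact_radius_pos: "x \<in> M \<Longrightarrow> 0 < compact_radius x"
proof -
  let ?S = "{s. 0 < s \<and> s \<le> 1 \<and> compactin mtopology (mcball x s)}"
  assume "x \<in> M"
  then obtain s where s: "s \<in> ?S" using compact_mcball_exists by blast
  have "bdd_above ?S" by (rule bdd_aboveI[of _ 1]) auto
  with s have "s \<le> compact_radius x" unfolding compact_radius_def by (rule cSup_upper)
  then show ?thesis using s by simp
qed

text \<open>Closed balls of radius below the compact radius are compact, being closed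
  subsets of a larger compact ball.\<close>
lemma compact_mcball_below_radius:
  assumes "x \<in> M" and "0 < s" and "s < compact_radius x"
  shows "compactin mtopology (mcball x s)"
proof -
  let ?S = "{s. 0 < s \<and> s \<le> 1 \<and> compactin mtopology (mcball x s)}"
  have "?S \<noteq> {}" using compact_mcball_exists[OF assms(1)] by blast
  then obtain t where t: "t \<in> ?S" "s < t"
    using less_cSupE[of s ?S] assms(3) unfolding compact_radius_def by blast
  then show ?thesis
    using closed_compactin[OF _ mcball_subset_concentric closedin_mcball, of x t s] by auto
qed

text \<open>The compact radius is 1-Lipschitz: a ball around y of radius s - d x y lies in a
  compact ball of radius s around x.\<close>
lemma compact_radius_lipschitz:
  assumes x: "x \<in> M" and y: "y \<in> M"
  shows "compact_radius x \<le> compact_radius y + d x y"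
proof (rule ccontr)
  let ?S = "\<lambda>x. {s. 0 < s \<and> s \<le> 1 \<and> compactin mtopology (mcball x s)}"
  assume "\<not> ?thesis"
  then have lt: "compact_radius y + d x y < Sup (?S x)" by (simp add: compact_radius_def)
  have "?S x \<noteq> {}" using compact_mcball_exists[OF x] by blast
  then obtain s where s: "s \<in> ?S x" "compact_radius y + d x y < s"
    using less_cSupE[OF lt] by blast
  define t where "t = s - d x y"
  have "mcball y t \<subseteq> mcball x s"
  proof
    fix z assume "z \<in> mcball y t"
    then show "z \<in> mcball x s" using x y triangle[of x y z] unfolding t_def by auto
  qed
  then have "compactin mtopology (mcball y t)"
    using s(1) closed_compactin closedin_mcball by blast
  moreover have "0 < t" "t \<le> 1"
  proof -
    have "s \<le> 1" "0 \<le> d x y" using s(1) nonneg[of x y] by simp_all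
    then show "0 < t" "t \<le> 1" using s(2) compact_radius_pos[OF y] unfolding t_def by linarith+
  qed
  moreover have "bdd_above (?S y)" by (rule bdd_aboveI[of _ 1]) auto
  ultimately have "t \<le> compact_radius y" unfolding compact_radius_def by (auto intro: cSup_upper)
  then show False using s unfolding t_def by simp
qed

definition near :: "'a \<Rightarrow> 'a \<Rightarrow> bool" where
  "near x y \<longleftrightarrow> x \<in> M \<and> y \<in> M \<and> d x y < min (compact_radius x) (compact_radius y) / 2"

definition chain_class :: "'a \<Rightarrow> 'a set" where
  "chain_class x = {y. near\<^sup>*\<^sup>* x y}"

lemma near_sym: "near x y \<Longrightarrow> near y x"
  unfolding near_def by (auto simp: commute min.commute)

lemma chain_class_self: "x \<in> chain_class x"
  unfolding chain_class_def by simp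

lemma chain_class_subset: "x \<in> M \<Longrightarrow> chain_class x \<subseteq> M"
proof
  fix y assume "x \<in> M" "y \<in> chain_class x"
  then have "near\<^sup>*\<^sup>* x y" unfolding chain_class_def by simp
  then show "y \<in> M" using \<open>x \<in> M\<close>
    by (induction rule: rtranclp_induct) (auto simp: near_def)
qed

text \<open>Chain classes are equivalence classes, since nearness is symmetric.\<close>
lemma chain_class_eq:
  assumes "y \<in> chain_class x"
  shows "chain_class y = chain_class x"
proof -
  have xy: "near\<^sup>*\<^sup>* x y" using assms unfolding chain_class_def by simp
  then have yx: "near\<^sup>*\<^sup>* y x"
    by (induction rule: rtranclp_induct) (auto intro: converse_rtranclp_into_rtranclp near_sym)
  show ?thesis
    unfolding chain_class_def using rtranclp_trans[OF xy] rtranclp_trans[OF yx] by blast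
qed

text \<open>Chain classes are open: the ball of radius r(y)/4 around y consists of points
  near y, by the Lipschitz property of the compact radius.\<close>
lemma openin_chain_class:
  assumes x: "x \<in> M"
  shows "openin mtopology (chain_class x)"
  unfolding openin_mtopology
proof (intro conjI allI impI)
  show "chain_class x \<subseteq> M" using chain_class_subset[OF x] .
  fix y assume y: "y \<in> chain_class x"
  then have yM: "y \<in> M" using chain_class_subset[OF x] by auto
  have "mball y (compact_radius y / 4) \<subseteq> chain_class x"
  proof
    fix z assume "z \<in> mball y (compact_radius y / 4)"
    then have z: "z \<in> M" "d y z < compact_radius y / 4" by auto
    have "compact_radius y \<le> compact_radius z + d y z"
      by (rule compact_radius_lipschitz[OF yM z(1)])
    then have "near y z" unfolding near_def using yM z compact_radius_pos[OF yM] by auto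
    then show "z \<in> chain_class x" using y unfolding chain_class_def by auto
  qed
  then show "\<exists>r>0. mball y r \<subseteq> chain_class x"
    using compact_radius_pos[OF yM] by (intro exI[of _ "compact_radius y / 4"]) auto
qed

text \<open>The points near a compact set K lie in a compact set: cover K by finitely many
  balls of radius r(x)/4; every point near K then lies in one of the compact balls of
  radius 7/8 r(x) around their centres.\<close>
lemma near_compact_subset_compact:
  assumes K: "compactin mtopology K"
  shows "\<exists>K'. compactin mtopology K' \<and> K \<subseteq> K' \<and> (\<forall>x\<in>K. \<forall>y. near x y \<longrightarrow> y \<in> K')"
proof -
  have KM: "K \<subseteq> M" using compactin_subset_topspace[OF K] by simp
  let ?ball = "\<lambda>x. mball x (compact_radius x / 4)"
  have "K \<subseteq> \<Union>(?ball ` K)" using KM compact_radius_pos by force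
  then have "\<exists>\<F>. finite \<F> \<and> \<F> \<subseteq> ?ball ` K \<and> K \<subseteq> \<Union>\<F>"
    by (rule compactinD[OF K, rotated]) auto
  then obtain \<F> where "finite \<F>" "\<F> \<subseteq> ?ball ` K" "K \<subseteq> \<Union>\<F>" by metis
  then obtain F where F: "F \<subseteq> K" "finite F" "K \<subseteq> \<Union>(?ball ` F)"
    using finite_subset_image[of \<F> ?ball K] by metis
  define K' where "K' = K \<union> (\<Union>x\<in>F. mcball x (7/8 * compact_radius x))"
  have "compactin mtopology K'" unfolding K'_def
  proof (intro compactin_Un[OF K] compactin_Union)
    fix S assume "S \<in> (\<lambda>x. mcball x (7/8 * compact_radius x)) ` F"
    then obtain x where x: "x \<in> F" "S = mcball x (7/8 * compact_radius x)" by blast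
    then have xM: "x \<in> M" using F(1) KM by auto
    show "compactin mtopology S" unfolding x(2)
      using compact_radius_pos[OF xM] by (intro compact_mcball_below_radius[OF xM]) auto
  qed (use F(2) in simp)
  moreover have "\<forall>x\<in>K. \<forall>y. near x y \<longrightarrow> y \<in> K'"
  proof (intro ballI allI impI)
    fix x y assume x: "x \<in> K" and xy: "near x y"
    obtain c where c: "c \<in> F" "x \<in> ?ball c" using F(3) x by blast
    have M3: "x \<in> M" "y \<in> M" "c \<in> M" using xy c unfolding near_def by auto
    have "compact_radius x \<le> compact_radius c + d x c"
      by (rule compact_radius_lipschitz[OF M3(1) M3(3)])
    moreover have "d x y < compact_radius x / 2" using xy unfolding near_def by auto
    moreover have "d c x < compact_radius c / 4" using c by auto
    moreover have "d c y \<le> d c x + d x y" using triangle M3 by blast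
    moreover have "d x c = d c x" by (rule commute)
    ultimately have "d c y \<le> 7/8 * compact_radius c" by linarith
    then show "y \<in> K'" unfolding K'_def using c(1) M3 by auto
  qed
  ultimately show ?thesis unfolding K'_def by blast
qed

text \<open>Each chain class is covered by countably many compact sets: iterating the previous
  lemma from {x} gives compact sets containing all points reachable in n steps.\<close>
lemma chain_class_countable_compact_cover:
  assumes x: "x \<in> M"
  shows "countable_compact_cover mtopology (chain_class x)"
proof -
  have "\<exists>K'. compactin mtopology K \<longrightarrow>
      compactin mtopology K' \<and> K \<subseteq> K' \<and> (\<forall>x\<in>K. \<forall>y. near x y \<longrightarrow> y \<in> K')" for K
    using near_compact_subset_compact by blast
  from choice[OF allI[OF this]] obtain grow where grow: "\<forall>K. compactin mtopology K \<longrightarrow>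
      compactin mtopology (grow K) \<and> K \<subseteq> grow K \<and> (\<forall>x\<in>K. \<forall>y. near x y \<longrightarrow> y \<in> grow K)"
    by (rule exE)
  define Ks where "Ks n = (grow ^^ n) {x}" for n
  have compact: "compactin mtopology (Ks n)" for n
    by (induction n) (auto simp: Ks_def x grow)
  have "\<exists>n. y \<in> Ks n" if "near\<^sup>*\<^sup>* x y" for y
    using that
  proof (induction rule: rtranclp_induct)
    case base
    then show ?case by (intro exI[of _ 0]) (simp add: Ks_def)
  next
    case (step y z)
    then obtain n where "y \<in> Ks n" by blast
    then have "z \<in> Ks (Suc n)" using grow[rule_format, OF compact] step(2) by (simp add: Ks_def)
    then show ?case by blast
  qed
  then have "chain_class x \<subseteq> \<Union>(range Ks)" unfolding chain_class_def by blast
  then show ?thesis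
    unfolding countable_compact_cover_def by (intro exI[of _ "range Ks"]) (simp add: compact)
qed

lemma chain_classes_partition:
  "\<And>U. U \<in> chain_class ` M \<Longrightarrow> openin mtopology U"
  "{} \<notin> chain_class ` M"
  "pairwise disjnt (chain_class ` M)"
  "\<Union>(chain_class ` M) = M"
proof -
  show "\<And>U. U \<in> chain_class ` M \<Longrightarrow> openin mtopology U" using openin_chain_class by blast
  show "{} \<notin> chain_class ` M" using chain_class_self by blast
  show "\<Union>(chain_class ` M) = M" using chain_class_self chain_class_subset by blast
  show "pairwise disjnt (chain_class ` M)"
  proof (rule pairwiseI)
    fix U V assume "U \<in> chain_class ` M" "V \<in> chain_class ` M" "U \<noteq> V"
    then obtain a b where U: "U = chain_class a" and V: "V = chain_class b" by blast
    show "disjnt U V" unfolding disjnt_def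
    proof (rule equals0I)
      fix z assume "z \<in> U \<inter> V"
      then have za: "z \<in> chain_class a" and zb: "z \<in> chain_class b" unfolding U V by simp_all
      have "chain_class z = U" unfolding U using za by (rule chain_class_eq)
      moreover have "chain_class z = V" unfolding V using zb by (rule chain_class_eq)
      ultimately show False using \<open>U \<noteq> V\<close> by simp
    qed
  qed
qed

theorem J_space_second_countable:
  assumes "J_space mtopology"
  shows "second_countable mtopology"
proof -
  have "finite (chain_class ` M)"
    using J_space_open_partition_finite[OF assms] chain_classes_partition by simp
  then have "countable_compact_cover mtopology (\<Union>U\<in>chain_class ` M. U)"
    using chain_class_countable_compact_cover
    by (intro countable_compact_cover_UN) (auto intro: countable_finite)
  then show ?thesis
    using chain_classes_partition(4) countable_compact_cover_imp_second_countable by simp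
qed

end

theorem proposition1p3:
  fixes X :: "'a topology"
  assumes "metrizable_space X" and "locally_compact_space X" and "J_space X"
  shows "second_countable X"
proof -
  obtain M d where "Metric_space M d" and X: "X = Metric_space.mtopology M d"
    using assms(1) unfolding metrizable_space_def by blast
  then interpret locally_compact_metric M d
    using assms(2) by (simp add: locally_compact_metric_def locally_compact_metric_axioms_def)
  show ?thesis using J_space_second_countable assms(3) X by simp
qed

end
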